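(* Let $C$ be a bivariate copula and $\theta\in(0,1)$. Define $C_{\theta,M}(u,v)=(1-\theta)C(u,v)+\theta M(u,v)$ and $C_{\theta,\Pi}(u,v)=(1-\theta)C(u,v)+\theta\Pi(u,v)$, where $M(u,v)=\min(u,v)$ and $\Pi(u,v)=uv$. Then: (1) if $\lim_{n\to\infty}C^n(u,v)=C_o(u,v)$ for all $(u,v)\in[0,1]^2$, then $\lim_{n\to\infty}C^n_{\theta,M}(u,v)=C_o(u,v)$ for all $(u,v)\in[0,1]^2$; (2) $\lim_{n\to\infty}C^n_{\theta,\Pi}(u,v)=\Pi(u,v)$ for all $(u,v)\in[0,1]^2$.
   Context: A bivariate copula is a bivariate distribution function on $[0,1]^2$ with uniform marginals on $[0,1]$. For copulas $C,D$, the fold product is $C*D(x,y)=\int_0^1 C_{,2}(x,t)D_{,1}(t,y)\,dt$, where $C_{,i}$ denotes the partial derivative with respect to the $i$-th variable. The $n$-fold product is defined by $C^1=C$ and $C^n=C^{n-1}*C$ for $n>1$. *)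

theory Defs
  imports "HOL-Analysis.Analysis"
begin

text \<open>A bivariate copula, represented as a real function of two real variables whose
  values on the unit square are the relevant ones: grounded, uniform marginals, 2-increasing.\<close>
definition is_copula :: "(real \<Rightarrow> real \<Rightarrow> real) \<Rightarrow> bool" where
  "is_copula C \<longleftrightarrow>
     (\<forall>u\<in>{0..1}. C u 0 = 0 \<and> C 0 u = 0 \<and> C u 1 = u \<and> C 1 u = u) \<and>
     (\<forall>u1 u2 v1 v2. 0 \<le> u1 \<and> u1 \<le> u2 \<and> u2 \<le> 1 \<and> 0 \<le> v1 \<and> v1 \<le> v2 \<and> v2 \<le> 1 \<longrightarrow>
        C u2 v2 - C u2 v1 - C u1 v2 + C u1 v1 \<ge> 0)"

definition copM :: "real \<Rightarrow> real \<Rightarrow> real" where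
  "copM u v = min u v"

definition copPi :: "real \<Rightarrow> real \<Rightarrow> real" where
  "copPi u v = u * v"

text \<open>Partial derivatives
  exist almost everywhere; the integral (Henstock-Kurzweil, equal to the Lebesgue integral
  here) does not depend on the values on the exceptional null set.\<close>
definition fold_prod :: "(real \<Rightarrow> real \<Rightarrow> real) \<Rightarrow> (real \<Rightarrow> real \<Rightarrow> real) \<Rightarrow> real \<Rightarrow> real \<Rightarrow> real" where
  "fold_prod C D x y = integral {0..1} (\<lambda>t. deriv (\<lambda>s. C x s) t * deriv (\<lambda>s. D s y) t)"

text \<open>n-fold product: C^1 = C, C^(n+1) = C^n * C.  We set C^0 = M (the unit of the fold
  product); the index 0 is irrelevant for limits as n tends to infinity.\<close>
primrec fold_pow :: "(real \<Rightarrow> real \<Rightarrow> real) \<Rightarrow> nat \<Rightarrow> real \<Rightarrow> real \<Rightarrow> real" where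
  "fold_pow C 0 = copM"
| "fold_pow C (Suc n) = (if n = 0 then C else fold_prod (fold_pow C n) C)"

end

theory Submission
  imports Defs
begin

(* The fold product is linear in each argument, has M as a two-sided unit and \<Pi> as a two-sided
   absorbing element. Consequently C_{\<theta>,\<Pi>}^n = (1-\<theta>)^n C^n + (1-(1-\<theta>)^n) \<Pi>, which tends
   to \<Pi>, while C_{\<theta>,M}^n = \<Sum>k\<le>n (n choose k) (1-\<theta>)^k \<theta>^(n-k) C^k is a binomial average
   of the powers C^k and therefore has the same limit as C^k.

   Since the fold product is defined through derivatives of copula sections, these identities
   rest on the sections being differentiable almost everywhere and integrals of their
   derivatives. Sections are monotone and 1-Lipschitz, and such functions satisfy Lebesgue's
   differentiation theorem by the classical Vitali covering argument: on the set where the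
   lower Dini derivative is below p and the upper one above q > p, the function shrinks outer
   measure by the factor p and expands it by the factor q, so the set is null. *)

section \<open>Differentiability of monotone Lipschitz functions\<close>

definition diff_quot :: "(real \<Rightarrow> real) \<Rightarrow> real \<Rightarrow> real \<Rightarrow> real" where
  "diff_quot f x h = (f (x + h) - f x) / h"

lemma has_real_derivative_iff_diff_quot:
  "(f has_real_derivative l) (at x) \<longleftrightarrow> (diff_quot f x \<longlongrightarrow> l) (at 0)"
  unfolding DERIV_def diff_quot_def ..

lemma diff_quot_mono_lipschitz:
  assumes "mono f" and "L-lipschitz_on UNIV f"
  shows "diff_quot f x h \<in> {0..L}"
proof -
  have "0 \<le> L" using assms(2) by (rule lipschitz_on_nonneg)
  moreover have "0 \<le> (f (x + h) - f x) / h"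
    using monoD[OF assms(1), of x "x + h"] monoD[OF assms(1), of "x + h" x]
    by (cases "0 \<le> h") (auto simp: divide_nonpos_neg)
  moreover have "\<bar>f (x + h) - f x\<bar> \<le> L * \<bar>h\<bar>"
    using lipschitz_onD[OF assms(2), of "x + h" x] by (simp add: dist_real_def)
  ultimately show ?thesis
    by (cases "h = 0") (auto simp: diff_quot_def abs_divide divide_le_eq abs_le_iff)
qed

lemma tendsto_of_bounded_nonoscillating:
  fixes \<phi> :: "'a \<Rightarrow> real"
  assumes "F \<noteq> bot" and bounded: "\<forall>\<^sub>F h in F. \<phi> h \<in> {lo..hi}"
    and nonosc: "\<And>p q. p \<in> \<rat> \<Longrightarrow> q \<in> \<rat> \<Longrightarrow> p < q \<Longrightarrow>
       (\<forall>\<^sub>F h in F. \<phi> h \<le> q) \<or> (\<forall>\<^sub>F h in F. p \<le> \<phi> h)"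
  shows "\<exists>l. (\<phi> \<longlongrightarrow> l) F"
proof -
  define S where "S = {q. \<forall>\<^sub>F h in F. \<phi> h \<le> q}"
  have "hi \<in> S"
    using bounded unfolding S_def by (auto elim: eventually_mono)
  then have "S \<noteq> {}" by blast
  have "lo \<le> q" if "q \<in> S" for q
  proof -
    have "\<forall>\<^sub>F h in F. lo \<le> q"
      using eventually_conj[OF bounded that[unfolded S_def, simplified]] by (rule eventually_mono) auto
    then show ?thesis using \<open>F \<noteq> bot\<close> by (simp add: eventually_const_iff)
  qed
  then have "bdd_below S" by (rule bdd_belowI)
  have "(\<phi> \<longlongrightarrow> Inf S) F"
  proof (rule order_tendstoI)
    fix a assume "Inf S < a"
    then obtain q where "q \<in> S" "q < a" using cInf_lessD[OF \<open>S \<noteq> {}\<close>] by blast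
    then show "\<forall>\<^sub>F h in F. \<phi> h < a" unfolding S_def by (auto elim: eventually_mono)
  next
    fix a assume "a < Inf S"
    obtain p where p: "p \<in> \<rat>" "a < p" "p < Inf S" using Rats_dense_in_real[OF \<open>a < Inf S\<close>] by blast
    obtain q where q: "q \<in> \<rat>" "p < q" "q < Inf S" using Rats_dense_in_real[OF p(3)] by blast
    have "q \<notin> S" using cInf_lower[OF _ \<open>bdd_below S\<close>] q(3) by force
    then have "\<forall>\<^sub>F h in F. p \<le> \<phi> h" using nonosc[OF p(1) q(1,2)] by (simp add: S_def)
    then show "\<forall>\<^sub>F h in F. a < \<phi> h" by eventually_elim (use p(2) in auto)
  qed
  then show ?thesis ..
qed

definition oscillation_set :: "(real \<Rightarrow> real) \<Rightarrow> real \<Rightarrow> real \<Rightarrow> real set" where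
  "oscillation_set f p q =
     {x. (\<exists>\<^sub>F h in at 0. diff_quot f x h < p) \<and> (\<exists>\<^sub>F h in at 0. q < diff_quot f x h)}"

lemma differentiable_outside_oscillation_sets:
  assumes "mono f" and "L-lipschitz_on UNIV f"
    and "\<And>p q. p \<in> \<rat> \<Longrightarrow> q \<in> \<rat> \<Longrightarrow> 0 \<le> p \<Longrightarrow> p < q \<Longrightarrow> x \<notin> oscillation_set f p q"
  shows "f differentiable (at x)"
proof -
  have range: "\<forall>\<^sub>F h in at 0. diff_quot f x h \<in> {0..L}"
    using diff_quot_mono_lipschitz[OF assms(1,2)] by simp
  have "\<exists>l. (diff_quot f x \<longlongrightarrow> l) (at 0)"
  proof (rule tendsto_of_bounded_nonoscillating[OF _ range])
    fix p q :: real assume "p \<in> \<rat>" "q \<in> \<rat>" "p < q"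
    show "(\<forall>\<^sub>F h in at 0. diff_quot f x h \<le> q) \<or> (\<forall>\<^sub>F h in at 0. p \<le> diff_quot f x h)"
    proof (cases "0 \<le> p")
      case True
      then show ?thesis
        using assms(3)[OF \<open>p \<in> \<rat>\<close> \<open>q \<in> \<rat>\<close> _ \<open>p < q\<close>]
        by (auto simp: oscillation_set_def not_frequently not_less)
    next
      case False
      then show ?thesis using range by (intro disjI2) (auto elim!: eventually_mono)
    qed
  qed simp
  then show ?thesis
    by (auto simp: real_differentiable_def has_real_derivative_iff_diff_quot)
qed

lemma frequently_at_0_iff_nat:
  "(\<exists>\<^sub>F h in at (0::real). P h) \<longleftrightarrow> (\<forall>m::nat. \<exists>h. h \<noteq> 0 \<and> \<bar>h\<bar> < 1 / Suc m \<and> P h)"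
proof -
  have "(\<forall>d>0. \<exists>h. h \<noteq> 0 \<and> \<bar>h\<bar> < d \<and> P h) \<longleftrightarrow> (\<forall>m::nat. \<exists>h. h \<noteq> 0 \<and> \<bar>h\<bar> < 1 / Suc m \<and> P h)"
  proof (intro iffI allI impI)
    fix d :: real assume "0 < d" and small: "\<forall>m::nat. \<exists>h. h \<noteq> 0 \<and> \<bar>h\<bar> < 1 / Suc m \<and> P h"
    obtain m :: nat where "1 / Suc m < d" by (rule nat_approx_posE[OF \<open>0 < d\<close>])
    moreover obtain h where "h \<noteq> 0" "\<bar>h\<bar> < 1 / Suc m" "P h" using small by blast
    ultimately show "\<exists>h. h \<noteq> 0 \<and> \<bar>h\<bar> < d \<and> P h" by auto
  qed simp
  then show ?thesis by (simp add: frequently_at dist_real_def)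
qed

lemma frequently_at_0_in_open_borel:
  fixes \<phi> :: "real \<Rightarrow> real \<Rightarrow> real"
  assumes cont: "\<And>h. h \<noteq> 0 \<Longrightarrow> continuous_on UNIV (\<lambda>x. \<phi> x h)" and "open W"
  shows "{x. \<exists>\<^sub>F h in at 0. \<phi> x h \<in> W} \<in> sets borel"
proof -
  have eq: "{x. \<exists>\<^sub>F h in at 0. \<phi> x h \<in> W} =
      (\<Inter>m::nat. \<Union>h\<in>{h. h \<noteq> 0 \<and> \<bar>h\<bar> < 1 / Suc m}. (\<lambda>x. \<phi> x h) -` W)"
    unfolding frequently_at_0_iff_nat by blast
  have "open (\<Union>h\<in>{h. h \<noteq> 0 \<and> \<bar>h\<bar> < 1 / Suc m}. (\<lambda>x. \<phi> x h) -` W)" for m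
    using open_vimage[OF \<open>open W\<close> cont] by blast
  then show ?thesis unfolding eq by (intro sets.countable_INT) (auto intro: borel_open)
qed

lemma oscillation_set_lmeasurable:
  assumes "continuous_on UNIV f"
  shows "oscillation_set f p q \<inter> {a..b} \<in> lmeasurable"
proof -
  have cont: "continuous_on UNIV (\<lambda>x. diff_quot f x h)" if "h \<noteq> 0" for h
    unfolding diff_quot_def using that
    by (intro continuous_intros continuous_on_compose2[OF assms]) auto
  have borel: "{x. \<exists>\<^sub>F h in at 0. diff_quot f x h \<in> W} \<in> sets borel" if "open W" for W
    using frequently_at_0_in_open_borel[OF cont that] by simp
  have "oscillation_set f p q \<in> sets borel"
    using borel[of "{..<p}"] borel[of "{q<..}"] by (simp add: oscillation_set_def Collect_conj_eq)
  then have "oscillation_set f p q \<inter> {a..b} \<in> sets lebesgue"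
    using sets_completionI_sets[of _ lborel] by simp
  then show ?thesis by (intro bounded_set_imp_lmeasurable) (simp_all add: bounded_Int)
qed

lemma frequently_diff_quot_imp_interval:
  assumes "\<exists>\<^sub>F h in at 0. P (diff_quot f x h)" and "0 < d"
  shows "\<exists>a b. a \<le> x \<and> x \<le> b \<and> a < b \<and> b - a < d \<and> P ((f b - f a) / (b - a))"
proof -
  obtain h where h: "h \<noteq> 0" "\<bar>h\<bar> < d" "P (diff_quot f x h)"
    using assms unfolding frequently_at by (auto simp: dist_real_def)
  show ?thesis
  proof (cases "0 < h")
    case True
    then show ?thesis using h by (intro exI[of _ x] exI[of _ "x + h"]) (auto simp: diff_quot_def)
  next
    case False
    have "(f x - f (x + h)) / (x - (x + h)) = diff_quot f x h"
      by (simp add: diff_quot_def) (metis minus_diff_eq minus_divide_left)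
    then show ?thesis using False h by (intro exI[of _ "x + h"] exI[of _ x]) auto
  qed
qed

lemma Vitali_covering_intervals:
  fixes A U :: "real set"
  assumes "open U" "A \<subseteq> U"
    and fine: "\<And>x d. x \<in> A \<Longrightarrow> 0 < d \<Longrightarrow> \<exists>a b. a \<le> x \<and> x \<le> b \<and> a < b \<and> b - a < d \<and> P a b"
  obtains I where "countable I" "\<And>a b. (a, b) \<in> I \<Longrightarrow> a < b \<and> {a..b} \<subseteq> U \<and> P a b"
    "pairwise (\<lambda>i j. snd i < fst j \<or> snd j < fst i) I"
    "negligible (A - (\<Union>(a, b)\<in>I. {a..b}))"
proof -
  define K where "K = {(a, b). a < b \<and> {a..b} \<subseteq> U \<and> P a b}"
  define c where "c i = (fst i + snd i) / 2" for i :: "real \<times> real"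
  define r where "r i = (snd i - fst i) / 2" for i :: "real \<times> real"
  have cball_eq: "cball (c i) (r i) = {fst i..snd i}" for i
    by (simp add: c_def r_def atLeastAtMost_eq_cball)
  have cover: "\<exists>i. i \<in> K \<and> x \<in> cball (c i) (r i) \<and> r i < d" if "x \<in> A" "0 < d" for x d
  proof -
    obtain e where "0 < e" "ball x e \<subseteq> U"
      using \<open>x \<in> A\<close> assms(1,2) openE by blast
    then obtain a b where ab: "a \<le> x" "x \<le> b" "a < b" "b - a < min d e" "P a b"
      using fine[OF \<open>x \<in> A\<close>, of "min d e"] \<open>0 < d\<close> by auto
    have "{a..b} \<subseteq> ball x e" using ab by (auto simp: dist_real_def)
    then have "(a, b) \<in> K" using ab \<open>ball x e \<subseteq> U\<close> by (auto simp: K_def)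
    moreover have "x \<in> cball (c (a, b)) (r (a, b))" unfolding cball_eq using ab by simp
    ultimately show ?thesis using ab by (intro exI[of _ "(a, b)"]) (auto simp: r_def)
  qed
  have radius: "0 < r i" if "i \<in> K" for i using that by (auto simp: K_def r_def)
  obtain I where I: "countable I" "I \<subseteq> K"
      "pairwise (\<lambda>i j. disjnt (cball (c i) (r i)) (cball (c j) (r j))) I"
      "negligible (A - (\<Union>i\<in>I. cball (c i) (r i)))"
    by (rule Vitali_covering_theorem_cballs[of K r A c, OF radius cover])
  show ?thesis
  proof
    have "snd i < fst j \<or> snd j < fst i" if "i \<in> I" "j \<in> I" "i \<noteq> j" for i j
    proof (rule ccontr)
      assume overlap: "\<not> (snd i < fst j \<or> snd j < fst i)"
      have "fst i < snd i" "fst j < snd j" using that I(2) by (auto simp: K_def)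
      then have "max (fst i) (fst j) \<in> cball (c i) (r i) \<inter> cball (c j) (r j)"
        using overlap unfolding cball_eq by auto
      moreover have "disjnt (cball (c i) (r i)) (cball (c j) (r j))"
        using I(3) that by (simp add: pairwise_def)
      ultimately show False unfolding disjnt_def by blast
    qed
    then show "pairwise (\<lambda>i j. snd i < fst j \<or> snd j < fst i) I"
      unfolding pairwise_def by blast
    show "negligible (A - (\<Union>(a, b)\<in>I. {a..b}))"
      using I(4) unfolding cball_eq by (simp add: case_prod_beta)
    show "a < b \<and> {a..b} \<subseteq> U \<and> P a b" if "(a, b) \<in> I" for a b
      using that I(2) by (auto simp: K_def)
  qed (rule I(1))
qed

lemma measure_Union_nonoverlapping_intervals:
  assumes "finite I" "\<And>i. i \<in> I \<Longrightarrow> l i \<le> u i"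
    and "pairwise (\<lambda>i j. u i \<le> l j \<or> u j \<le> l i) I"
  shows "measure lebesgue (\<Union>i\<in>I. {l i..u i}) = (\<Sum>i\<in>I. u i - l i)"
proof -
  have "negligible ({l i..u i} \<inter> {l j..u j})" if "u i \<le> l j \<or> u j \<le> l i" for i j
  proof -
    have "{l i..u i} \<inter> {l j..u j} \<subseteq> {u i, u j}" using that by auto
    then show ?thesis by (rule negligible_subset[rotated]) simp
  qed
  then have "measure lebesgue (\<Union>i\<in>I. {l i..u i}) = (\<Sum>i\<in>I. measure lebesgue {l i..u i})"
    using assms(3)
    by (intro measure_negligible_finite_Union_image[OF assms(1)]) (auto simp: pairwise_def)
  also have "\<dots> = (\<Sum>i\<in>I. u i - l i)"
    using assms(2) by (intro sum.cong) auto
  finally show ?thesis .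
qed

lemma lmeasurable_outer_open:
  assumes "S \<in> lmeasurable" and "0 < e"
  obtains U where "open U" "S \<subseteq> U" "U \<in> lmeasurable" "measure lebesgue U \<le> measure lebesgue S + e"
proof -
  obtain U where U: "open U" "S \<subseteq> U" "U - S \<in> lmeasurable" "emeasure lebesgue (U - S) < ennreal e"
    using sets_lebesgue_outer_open[of S e] assms by (auto simp: fmeasurable_def)
  have "U = S \<union> (U - S)" using U(2) by blast
  then have "U \<in> lmeasurable" and "measure lebesgue U \<le> measure lebesgue S + measure lebesgue (U - S)"
    using assms(1) U(3) by (metis fmeasurable.Un, metis fmeasurable_def measure_Un_le mem_Collect_eq)
  moreover have "measure lebesgue (U - S) \<le> e"
    using U(3,4) \<open>0 < e\<close> by (simp add: emeasure_eq_measure2 ennreal_less_iff less_imp_le)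
  ultimately show ?thesis using that U(1,2) by force
qed

lemma measure_Union_separated_intervals:
  assumes "finite I" "\<And>i. i \<in> I \<Longrightarrow> fst i \<le> snd i"
    and "pairwise (\<lambda>i j. snd i < fst j \<or> snd j < fst i) I"
  shows "measure lebesgue (\<Union>i\<in>I. {fst i..snd i}) = (\<Sum>i\<in>I. snd i - fst i)"
  using assms(3)
  by (intro measure_Union_nonoverlapping_intervals[OF assms(1,2)]) (auto elim: pairwise_mono)

lemma measure_image_intervals_le:
  fixes g :: "real \<Rightarrow> real"
  assumes "mono g" "finite I" "pairwise (\<lambda>i j. snd i < fst j \<or> snd j < fst i) I"
    "U \<in> lmeasurable" "0 \<le> p"
    and intervals: "\<And>i. i \<in> I \<Longrightarrow>
      fst i < snd i \<and> {fst i..snd i} \<subseteq> U \<and> g (snd i) - g (fst i) \<le> p * (snd i - fst i)"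
  shows "measure lebesgue (\<Union>i\<in>I. {g (fst i)..g (snd i)}) \<le> p * measure lebesgue U"
proof -
  have "measure lebesgue (\<Union>i\<in>I. {g (fst i)..g (snd i)}) \<le>
      (\<Sum>i\<in>I. measure lebesgue {g (fst i)..g (snd i)})"
    using assms(2) by (intro measure_UNION_le) auto
  also have "\<dots> \<le> (\<Sum>i\<in>I. p * (snd i - fst i))"
    using intervals monoD[OF assms(1)] by (intro sum_mono) (simp add: less_imp_le)
  also have "\<dots> = p * measure lebesgue (\<Union>i\<in>I. {fst i..snd i})"
    using measure_Union_separated_intervals[OF assms(2) _ assms(3)] intervals
    by (simp add: sum_distrib_left less_imp_le)
  also have "\<dots> \<le> p * measure lebesgue U"
    using intervals assms(2,4,5)
    by (intro mult_left_mono measure_mono_fmeasurable) (auto intro!: sets.finite_UN)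
  finally show ?thesis .
qed

lemma measure_intervals_le_image:
  fixes g :: "real \<Rightarrow> real"
  assumes "mono g" "continuous_on UNIV g" "finite I" "pairwise (\<lambda>i j. snd i < fst j \<or> snd j < fst i) I"
    "V \<in> lmeasurable"
    and intervals: "\<And>i. i \<in> I \<Longrightarrow>
      fst i < snd i \<and> g ` {fst i..snd i} \<subseteq> V \<and> q * (snd i - fst i) \<le> g (snd i) - g (fst i)"
  shows "q * measure lebesgue (\<Union>i\<in>I. {fst i..snd i}) \<le> measure lebesgue V"
proof -
  have "q * measure lebesgue (\<Union>i\<in>I. {fst i..snd i}) = (\<Sum>i\<in>I. q * (snd i - fst i))"
    using measure_Union_separated_intervals[OF assms(3) _ assms(4)] intervals
    by (simp add: sum_distrib_left less_imp_le)
  also have "\<dots> \<le> (\<Sum>i\<in>I. g (snd i) - g (fst i))"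
    using intervals by (intro sum_mono) blast
  also have "\<dots> = measure lebesgue (\<Union>i\<in>I. {g (fst i)..g (snd i)})"
  proof (rule measure_Union_nonoverlapping_intervals[OF assms(3), symmetric])
    show "g (fst i) \<le> g (snd i)" if "i \<in> I" for i
      using intervals[OF that] monoD[OF assms(1)] by simp
    show "pairwise (\<lambda>i j. g (snd i) \<le> g (fst j) \<or> g (snd j) \<le> g (fst i)) I"
      by (rule pairwise_mono[OF assms(4)]) (auto intro: monoD[OF assms(1)])
  qed
  also have "\<dots> \<le> measure lebesgue V"
  proof (rule measure_mono_fmeasurable)
    have "{g (fst i)..g (snd i)} \<subseteq> g ` {fst i..snd i}" if "i \<in> I" for i
      using IVT'[of g "fst i" _ "snd i"] intervals[OF that] continuous_on_subset[OF assms(2)]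
      by (fastforce simp: image_iff)
    then show "(\<Union>i\<in>I. {g (fst i)..g (snd i)}) \<subseteq> V" using intervals by blast
  qed (use assms(3,5) in auto)
  finally show ?thesis .
qed

lemma image_measure_bound_slow_growth:
  fixes g :: "real \<Rightarrow> real"
  assumes "mono g" "K-lipschitz_on UNIV g" "open U" "U \<in> lmeasurable" "A \<subseteq> U" "0 \<le> p"
    and slow: "\<And>x d. x \<in> A \<Longrightarrow> 0 < d \<Longrightarrow>
       \<exists>a b. a \<le> x \<and> x \<le> b \<and> a < b \<and> b - a < d \<and> (g b - g a) / (b - a) < p"
  obtains T where "T \<in> lmeasurable" "g ` A \<subseteq> T" "measure lebesgue T \<le> p * measure lebesgue U"
proof -
  obtain I where I: "countable I"
      "\<And>a b. (a, b) \<in> I \<Longrightarrow> a < b \<and> {a..b} \<subseteq> U \<and> (g b - g a) / (b - a) < p"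
      "pairwise (\<lambda>i j. snd i < fst j \<or> snd j < fst i) I"
    and N: "negligible (A - (\<Union>(a, b)\<in>I. {a..b}))"
    using Vitali_covering_intervals[OF assms(3,5), of "\<lambda>a b. (g b - g a) / (b - a) < p"] slow by blast
  define J where "J = (\<Union>i\<in>I. {g (fst i)..g (snd i)})"
  define N where "N = A - (\<Union>(a, b)\<in>I. {a..b})"
  have "negligible (g ` N)"
  proof (rule negligible_locally_Lipschitz_image[OF order_refl N[folded N_def]])
    show "\<exists>T B. open T \<and> x \<in> T \<and> (\<forall>y\<in>N \<inter> T. norm (g y - g x) \<le> B * norm (y - x))" for x
      using lipschitz_onD[OF assms(2)] by (intro exI[of _ UNIV] exI[of _ K]) (auto simp: dist_norm)
  qed
  have slope: "g b - g a \<le> p * (b - a)" if "(a, b) \<in> I" for a b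
    using I(2)[OF that] pos_divide_less_eq[of "b - a" "g b - g a" p] by auto
  have bound: "measure lebesgue (\<Union>i\<in>I'. {g (fst i)..g (snd i)}) \<le> p * measure lebesgue U"
    if "I' \<subseteq> I" "finite I'" for I'
  proof (rule measure_image_intervals_le[OF assms(1) \<open>finite I'\<close> pairwise_subset[OF I(3)] assms(4,6)])
    fix i assume "i \<in> I'"
    then have i: "(fst i, snd i) \<in> I" using that by auto
    show "fst i < snd i \<and> {fst i..snd i} \<subseteq> U \<and> g (snd i) - g (fst i) \<le> p * (snd i - fst i)"
      using I(2)[OF i] slope[OF i] by simp
  qed fact
  have J: "J \<in> lmeasurable" "measure lebesgue J \<le> p * measure lebesgue U"
    unfolding J_def using fmeasurable_UN_bound[OF I(1) _ bound] measure_UN_bound[OF I(1) _ bound]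
    by auto
  show ?thesis
  proof
    show "J \<union> g ` N \<in> lmeasurable"
      using J(1) \<open>negligible (g ` N)\<close> by (simp add: fmeasurable.Un negligible_imp_measurable)
    show "measure lebesgue (J \<union> g ` N) \<le> p * measure lebesgue U"
      using J \<open>negligible (g ` N)\<close> by (simp add: measure_Un_null_set negligible_iff_null_sets)
    show "g ` A \<subseteq> J \<union> g ` N"
    proof
      fix y assume "y \<in> g ` A"
      then obtain x where "x \<in> A" "y = g x" by blast
      show "y \<in> J \<union> g ` N"
      proof (cases "x \<in> N")
        case False
        then obtain i where "i \<in> I" "x \<in> {fst i..snd i}" using \<open>x \<in> A\<close> by (auto simp: N_def)
        then have "y \<in> {g (fst i)..g (snd i)}" using \<open>y = g x\<close> monoD[OF assms(1)] by auto
        then show ?thesis using \<open>i \<in> I\<close> by (auto simp: J_def)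
      qed (use \<open>y = g x\<close> in auto)
    qed
  qed
qed

lemma measure_bound_fast_growth:
  fixes g :: "real \<Rightarrow> real"
  assumes "mono g" "continuous_on UNIV g" "open V" "V \<in> lmeasurable" "g ` A \<subseteq> V" "0 < q"
    and fast: "\<And>x d. x \<in> A \<Longrightarrow> 0 < d \<Longrightarrow>
       \<exists>a b. a \<le> x \<and> x \<le> b \<and> a < b \<and> b - a < d \<and> q < (g b - g a) / (b - a)"
  obtains T where "T \<in> lmeasurable" "A \<subseteq> T" "q * measure lebesgue T \<le> measure lebesgue V"
proof -
  have "open (g -` V)" "A \<subseteq> g -` V" using open_vimage[OF assms(3,2)] assms(5) by auto
  then obtain I where I: "countable I"
      "\<And>a b. (a, b) \<in> I \<Longrightarrow> a < b \<and> {a..b} \<subseteq> g -` V \<and> q < (g b - g a) / (b - a)"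
      "pairwise (\<lambda>i j. snd i < fst j \<or> snd j < fst i) I"
    and N: "negligible (A - (\<Union>(a, b)\<in>I. {a..b}))"
    using Vitali_covering_intervals[of "g -` V" A "\<lambda>a b. q < (g b - g a) / (b - a)"] fast by blast
  have slope: "q * (b - a) \<le> g b - g a" if "(a, b) \<in> I" for a b
    using I(2)[OF that] pos_less_divide_eq[of "b - a" q "g b - g a"] by (auto simp: mult.commute)
  define J where "J = (\<Union>i\<in>I. {fst i..snd i})"
  have bound: "measure lebesgue (\<Union>i\<in>I'. {fst i..snd i}) \<le> measure lebesgue V / q"
    if "I' \<subseteq> I" "finite I'" for I'
  proof -
    have "q * measure lebesgue (\<Union>i\<in>I'. {fst i..snd i}) \<le> measure lebesgue V"
    proof (rule measure_intervals_le_image[OF assms(1,2) \<open>finite I'\<close> pairwise_subset[OF I(3)] assms(4)])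
      fix i assume "i \<in> I'"
      then have i: "(fst i, snd i) \<in> I" using that by auto
      show "fst i < snd i \<and> g ` {fst i..snd i} \<subseteq> V \<and> q * (snd i - fst i) \<le> g (snd i) - g (fst i)"
        using I(2)[OF i] slope[OF i] by auto
    qed fact
    then show ?thesis using \<open>0 < q\<close> by (simp add: field_simps)
  qed
  have J: "J \<in> lmeasurable" "measure lebesgue J \<le> measure lebesgue V / q"
    unfolding J_def using fmeasurable_UN_bound[OF I(1) _ bound] measure_UN_bound[OF I(1) _ bound]
    by auto
  show ?thesis
  proof
    define N where "N = A - (\<Union>(a, b)\<in>I. {a..b})"
    show "J \<union> N \<in> lmeasurable"
      using J(1) N by (simp add: N_def fmeasurable.Un negligible_imp_measurable)
    show "A \<subseteq> J \<union> N" by (auto simp: J_def N_def)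
    show "q * measure lebesgue (J \<union> N) \<le> measure lebesgue V"
      using J N \<open>0 < q\<close> by (simp add: N_def measure_Un_null_set negligible_iff_null_sets field_simps)
  qed
qed

lemma oscillation_set_measure_estimate:
  fixes f :: "real \<Rightarrow> real" and a b :: real
  assumes "mono f" "L-lipschitz_on UNIV f" "0 \<le> p" "p < q" "0 < e"
  defines "E \<equiv> oscillation_set f p q \<inter> {a..b}"
  shows "q * measure lebesgue E \<le> p * measure lebesgue E + (p + 1) * e"
proof -
  have cont: "continuous_on UNIV f" using assms(2) by (rule lipschitz_on_continuous_on)
  have E: "E \<in> lmeasurable" unfolding E_def by (rule oscillation_set_lmeasurable[OF cont])
  have slow: "\<exists>a b. a \<le> x \<and> x \<le> b \<and> a < b \<and> b - a < d \<and> (f b - f a) / (b - a) < p"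
    and fast: "\<exists>a b. a \<le> x \<and> x \<le> b \<and> a < b \<and> b - a < d \<and> q < (f b - f a) / (b - a)"
    if "x \<in> E" "0 < d" for x d
    using frequently_diff_quot_imp_interval[of "\<lambda>r. r < p"]
      frequently_diff_quot_imp_interval[of "\<lambda>r. q < r"] that
    by (simp_all add: E_def oscillation_set_def)
  obtain U where U: "open U" "E \<subseteq> U" "U \<in> lmeasurable" "measure lebesgue U \<le> measure lebesgue E + e"
    by (rule lmeasurable_outer_open[OF E \<open>0 < e\<close>])
  obtain T where T: "T \<in> lmeasurable" "f ` E \<subseteq> T" "measure lebesgue T \<le> p * measure lebesgue U"
    by (rule image_measure_bound_slow_growth[OF assms(1,2) U(1,3,2) \<open>0 \<le> p\<close> slow])
  obtain V where V: "open V" "T \<subseteq> V" "V \<in> lmeasurable" "measure lebesgue V \<le> measure lebesgue T + e"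
    by (rule lmeasurable_outer_open[OF T(1) \<open>0 < e\<close>])
  have "f ` E \<subseteq> V" "0 < q" using T(2) V(2) assms(3,4) by auto
  then obtain T' where T': "T' \<in> lmeasurable" "E \<subseteq> T'" "q * measure lebesgue T' \<le> measure lebesgue V"
    using measure_bound_fast_growth[OF assms(1) cont V(1,3) _ _ fast] by blast
  have "q * measure lebesgue E \<le> q * measure lebesgue T'"
    using T' E assms(3,4) by (intro mult_left_mono measure_mono_fmeasurable) auto
  also have "\<dots> \<le> p * measure lebesgue U + e" using T' V T by linarith
  also have "\<dots> \<le> p * (measure lebesgue E + e) + e"
    using U(4) assms(3) by (simp add: mult_left_mono)
  finally show ?thesis by (simp add: algebra_simps)
qed

lemma negligible_oscillation_set:
  assumes "mono f" "L-lipschitz_on UNIV f" "0 \<le> p" "p < q"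
  shows "negligible (oscillation_set f p q)"
proof -
  have "negligible (oscillation_set f p q \<inter> cbox a b)" for a b
  proof -
    define E where "E = oscillation_set f p q \<inter> {a..b}"
    have "q * measure lebesgue E \<le> p * measure lebesgue E + e" if "0 < e" for e
      using oscillation_set_measure_estimate[OF assms, of "e / (p + 1)" a b] that assms(3)
      by (simp add: E_def)
    then have "(q - p) * measure lebesgue E \<le> 0"
      by (simp add: algebra_simps field_le_epsilon)
    then have "measure lebesgue E = 0"
      using assms(4) by (simp add: mult_le_0_iff order.antisym)
    moreover have "E \<in> lmeasurable"
      unfolding E_def using assms(2) by (intro oscillation_set_lmeasurable lipschitz_on_continuous_on)
    ultimately show ?thesis by (simp add: E_def negligible_iff_measure0)
  qed
  then show ?thesis by (subst negligible_on_intervals) blast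
qed

theorem mono_lipschitz_differentiable_ae:
  fixes f :: "real \<Rightarrow> real"
  assumes "mono f" "L-lipschitz_on UNIV f"
  shows "negligible {x. \<not> f differentiable (at x)}"
proof -
  define Q :: "(real \<times> real) set" where "Q = {(p, q). p \<in> \<rat> \<and> q \<in> \<rat> \<and> 0 \<le> p \<and> p < q}"
  have "countable Q"
    by (rule countable_subset[of _ "\<rat> \<times> \<rat>"]) (auto simp: Q_def countable_rat)
  then have "negligible (\<Union>(p, q)\<in>Q. oscillation_set f p q)"
    by (intro negligible_countable_Union countable_image)
      (auto simp: Q_def intro: negligible_oscillation_set[OF assms])
  moreover have "{x. \<not> f differentiable (at x)} \<subseteq> (\<Union>(p, q)\<in>Q. oscillation_set f p q)"
  proof
    fix x assume "x \<in> {x. \<not> f differentiable (at x)}"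
    then obtain p q where "p \<in> \<rat>" "q \<in> \<rat>" "0 \<le> p" "p < q" "x \<in> oscillation_set f p q"
      using differentiable_outside_oscillation_sets[OF assms, of x] by blast
    then show "x \<in> (\<Union>(p, q)\<in>Q. oscillation_set f p q)" by (auto simp: Q_def)
  qed
  ultimately show ?thesis by (rule negligible_subset)
qed

lemma deriv_mono_lipschitz:
  fixes f :: "real \<Rightarrow> real"
  assumes "mono f" "L-lipschitz_on UNIV f" "f differentiable (at x)"
  shows "deriv f x \<in> {0..L}"
proof -
  have "(diff_quot f x \<longlongrightarrow> deriv f x) (at 0)"
    using assms(3)
    by (simp add: DERIV_deriv_iff_real_differentiable flip: has_real_derivative_iff_diff_quot)
  moreover have "\<forall>\<^sub>F h in at 0. diff_quot f x h \<in> {0..L}"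
    using diff_quot_mono_lipschitz[OF assms(1,2)] by simp
  ultimately show ?thesis by (intro Lim_in_closed_set) auto
qed

lemma mono_average_tendsto:
  fixes f :: "real \<Rightarrow> real" and \<delta> :: "nat \<Rightarrow> real"
  assumes "mono f" "continuous_on UNIV f" "\<And>k. 0 < \<delta> k" "\<delta> \<longlonglongrightarrow> 0"
  shows "(\<lambda>k. integral {c..c + \<delta> k} f / \<delta> k) \<longlonglongrightarrow> f c"
proof (rule real_tendsto_sandwich)
  have int: "f integrable_on {c..c + \<delta> k}" for k
    by (rule integrable_continuous_real) (rule continuous_on_subset[OF assms(2)], simp)
  have "f c * \<delta> k \<le> integral {c..c + \<delta> k} f" for k
  proof -
    have "integral {c..c + \<delta> k} (\<lambda>x. f c) \<le> integral {c..c + \<delta> k} f"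
      by (rule integral_le) (auto intro: int monoD[OF assms(1)])
    then show ?thesis using assms(3)[of k] by (simp add: mult.commute)
  qed
  then show "\<forall>\<^sub>F k in sequentially. f c \<le> integral {c..c + \<delta> k} f / \<delta> k"
    using assms(3) by (simp add: pos_le_divide_eq)
  have "integral {c..c + \<delta> k} f \<le> f (c + \<delta> k) * \<delta> k" for k
  proof -
    have "integral {c..c + \<delta> k} f \<le> integral {c..c + \<delta> k} (\<lambda>x. f (c + \<delta> k))"
      by (rule integral_le) (auto intro: int monoD[OF assms(1)])
    then show ?thesis using assms(3)[of k] by (simp add: mult.commute)
  qed
  then show "\<forall>\<^sub>F k in sequentially. integral {c..c + \<delta> k} f / \<delta> k \<le> f (c + \<delta> k)"
    using assms(3) by (simp add: pos_divide_le_eq)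
  have "isCont f c" using assms(2) by (simp add: continuous_on_eq_continuous_at)
  then show "(\<lambda>k. f (c + \<delta> k)) \<longlonglongrightarrow> f c"
    using isCont_tendsto_compose[OF _ tendsto_add[OF tendsto_const assms(4), of c]] by simp
qed simp

lemma has_integral_diff_quot:
  fixes f :: "real \<Rightarrow> real"
  assumes "continuous_on UNIV f" "a \<le> b" "0 < h"
  shows "((\<lambda>x. diff_quot f x h) has_integral
    (integral {b..b + h} f - integral {a..a + h} f) / h) {a..b}"
proof -
  have int: "f integrable_on {u..v}" for u v
    by (rule integrable_continuous_real) (rule continuous_on_subset[OF assms(1)], simp)
  have "((\<lambda>x. f (x + h)) has_integral integral {a + h..b + h} f) {a..b}"
    using has_integral_shift_Icc_real[of f h _ a b] int[THEN integrable_integral]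
    by (simp add: o_def add.commute)
  then have "((\<lambda>x. diff_quot f x h) has_integral
      (integral {a + h..b + h} f - integral {a..b} f) / h) {a..b}"
    unfolding diff_quot_def using int by (intro has_integral_divide has_integral_diff) auto
  moreover have "integral {a + h..b + h} f - integral {a..b} f =
      integral {b..b + h} f - integral {a..a + h} f"
    using Henstock_Kurzweil_Integration.integral_combine[where a=a and c="a + h" and b="b + h" and f=f]
      Henstock_Kurzweil_Integration.integral_combine[where a=a and c=b and b="b + h" and f=f]
      int assms(2,3) by simp
  ultimately show ?thesis by simp
qed

theorem mono_lipschitz_has_integral_deriv:
  fixes f :: "real \<Rightarrow> real"
  assumes "mono f" "L-lipschitz_on UNIV f" "a \<le> b"
  shows "(deriv f has_integral f b - f a) {a..b}"
proof -
  have cont: "continuous_on UNIV f" using assms(2) by (rule lipschitz_on_continuous_on)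
  define N where "N = {x. \<not> f differentiable (at x)}"
  have "negligible N" unfolding N_def by (rule mono_lipschitz_differentiable_ae[OF assms(1,2)])
  define S where "S = {a..b} - N"
  have spike: "(g has_integral I) S \<longleftrightarrow> (g has_integral I) {a..b}" for g :: "real \<Rightarrow> real" and I
    unfolding S_def
    by (rule has_integral_spike_set_eq) (auto intro: negligible_subset[OF \<open>negligible N\<close>])
  define \<delta> :: "nat \<Rightarrow> real" where "\<delta> k = 1 / Suc k" for k
  have \<delta>: "0 < \<delta> k" for k by (simp add: \<delta>_def)
  have "\<delta> \<longlonglongrightarrow> 0" unfolding \<delta>_def by (rule LIMSEQ_Suc[OF lim_const_over_n])
  \<comment> \<open>the integrals of the difference quotients are averages of f just right of b and of a\<close>
  show ?thesis
  proof (rule has_integral_dominated_convergence[where f="\<lambda>k x. diff_quot f x (\<delta> k)" and h="\<lambda>x. L",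
        THEN iffD1[OF spike]])
    show "((\<lambda>x. diff_quot f x (\<delta> k)) has_integral
        (integral {b..b + \<delta> k} f - integral {a..a + \<delta> k} f) / \<delta> k) S" for k
      using has_integral_diff_quot[OF cont assms(3) \<delta>] spike by blast
    show "(\<lambda>x. L) integrable_on S" using spike integrable_const_ivl unfolding integrable_on_def by blast
    show "\<forall>x\<in>S. norm (diff_quot f x (\<delta> k)) \<le> L" for k
      using diff_quot_mono_lipschitz[OF assms(1,2)] by auto
    show "\<forall>x\<in>S. (\<lambda>k. diff_quot f x (\<delta> k)) \<longlonglongrightarrow> deriv f x"
    proof
      fix x assume "x \<in> S"
      then have "(diff_quot f x \<longlongrightarrow> deriv f x) (at 0)"
        by (simp add: S_def N_def DERIV_deriv_iff_real_differentiable
            flip: has_real_derivative_iff_diff_quot)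
      moreover have "filterlim \<delta> (at 0) sequentially"
        using \<open>\<delta> \<longlonglongrightarrow> 0\<close> \<delta> by (auto simp: filterlim_at less_imp_neq[symmetric])
      ultimately show "(\<lambda>k. diff_quot f x (\<delta> k)) \<longlonglongrightarrow> deriv f x"
        by (rule filterlim_compose)
    qed
    show "(\<lambda>k. (integral {b..b + \<delta> k} f - integral {a..a + \<delta> k} f) / \<delta> k) \<longlonglongrightarrow> f b - f a"
      unfolding diff_divide_distrib
      by (intro tendsto_diff mono_average_tendsto[OF assms(1) cont \<delta> \<open>\<delta> \<longlonglongrightarrow> 0\<close>])
  qed
qed

section \<open>Copulas and their fold product\<close>

lemma is_copula_transpose: "is_copula C \<Longrightarrow> is_copula (\<lambda>u v. C v u)"
  unfolding is_copula_def
proof (elim conjE, intro conjI allI impI)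
  fix u1 u2 v1 v2 :: real
  assume "\<forall>u1 u2 v1 v2. 0 \<le> u1 \<and> u1 \<le> u2 \<and> u2 \<le> 1 \<and> 0 \<le> v1 \<and> v1 \<le> v2 \<and> v2 \<le> 1 \<longrightarrow>
      0 \<le> C u2 v2 - C u2 v1 - C u1 v2 + C u1 v1"
    and "0 \<le> u1 \<and> u1 \<le> u2 \<and> u2 \<le> 1 \<and> 0 \<le> v1 \<and> v1 \<le> v2 \<and> v2 \<le> 1"
  then have "0 \<le> C v2 u2 - C v2 u1 - C v1 u2 + C v1 u1" by blast
  then show "0 \<le> C v2 u2 - C v1 u2 - C v2 u1 + C v1 u1" by linarith
qed auto

lemma is_copula_boundary:
  assumes "is_copula C" "u \<in> {0..1}"
  shows "C u 0 = 0" "C 0 u = 0" "C u 1 = u" "C 1 u = u"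
  using assms unfolding is_copula_def by blast+

lemma is_copula_2_increasing:
  assumes "is_copula C" "0 \<le> u1" "u1 \<le> u2" "u2 \<le> 1" "0 \<le> v1" "v1 \<le> v2" "v2 \<le> 1"
  shows "0 \<le> C u2 v2 - C u2 v1 - C u1 v2 + C u1 v1"
  using assms unfolding is_copula_def by blast

lemma copula_section_increment:
  assumes "is_copula C" "x \<in> {0..1}" "0 \<le> s" "s \<le> t" "t \<le> 1"
  shows "0 \<le> C x t - C x s" "C x t - C x s \<le> t - s"
  using is_copula_2_increasing[OF assms(1), of 0 x s t] is_copula_2_increasing[OF assms(1), of x 1 s t]
    is_copula_boundary[OF assms(1), of s] is_copula_boundary[OF assms(1), of t] assms(2-5)
  by auto

lemma copula_range:
  assumes "is_copula C" "x \<in> {0..1}" "y \<in> {0..1}"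
  shows "C x y \<in> {0..1}"
  using copula_section_increment[OF assms(1,2), of 0 y] is_copula_boundary[OF assms(1,2)] assms(3)
  by auto

lemma is_copula_copM: "is_copula copM"
  unfolding is_copula_def copM_def by (auto simp: min_def)

lemma is_copula_copPi: "is_copula copPi"
  unfolding is_copula_def copPi_def
proof (intro conjI ballI allI impI)
  fix u1 u2 v1 v2 :: real
  assume "0 \<le> u1 \<and> u1 \<le> u2 \<and> u2 \<le> 1 \<and> 0 \<le> v1 \<and> v1 \<le> v2 \<and> v2 \<le> 1"
  then have "0 \<le> (u2 - u1) * (v2 - v1)" by simp
  then show "0 \<le> u2 * v2 - u2 * v1 - u1 * v2 + u1 * v1" by (simp add: algebra_simps)
qed auto

lemma is_copula_convex_comb:
  assumes "is_copula C" "is_copula D" "0 \<le> \<theta>" "\<theta> \<le> 1"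
  shows "is_copula (\<lambda>x y. (1 - \<theta>) * C x y + \<theta> * D x y)"
proof -
  have "0 \<le> (1 - \<theta>) * (C u2 v2 - C u2 v1 - C u1 v2 + C u1 v1) +
      \<theta> * (D u2 v2 - D u2 v1 - D u1 v2 + D u1 v1)"
    if "0 \<le> u1" "u1 \<le> u2" "u2 \<le> 1" "0 \<le> v1" "v1 \<le> v2" "v2 \<le> 1" for u1 u2 v1 v2
    using is_copula_2_increasing[OF assms(1) that] is_copula_2_increasing[OF assms(2) that] assms(3,4)
    by simp
  then show ?thesis
    using is_copula_boundary[OF assms(1)] is_copula_boundary[OF assms(2)]
    unfolding is_copula_def by (simp add: algebra_simps)
qed

lemma eventually_nhds_eq_on_interval:
  fixes a b t :: real
  assumes "\<And>s. s \<in> {a..b} \<Longrightarrow> f s = g s" "t \<in> {a<..<b}"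
  shows "\<forall>\<^sub>F s in nhds t. f s = g s"
proof -
  have "\<forall>\<^sub>F s in nhds t. s \<in> {a<..<b}" using assms(2) by (intro eventually_nhds_in_open) auto
  then show ?thesis by eventually_elim (use assms(1) in auto)
qed

lemma copula_section_clamped:
  assumes "is_copula C" "x \<in> {0..1}"
  shows "mono (\<lambda>s. C x (max 0 (min 1 s)))" "1-lipschitz_on UNIV (\<lambda>s. C x (max 0 (min 1 s)))"
proof -
  have incr: "0 \<le> C x (max 0 (min 1 t)) - C x (max 0 (min 1 s)) \<and>
      C x (max 0 (min 1 t)) - C x (max 0 (min 1 s)) \<le> t - s" if "s \<le> t" for s t
    using copula_section_increment[OF assms, of "max 0 (min 1 s)" "max 0 (min 1 t)"] that
    by (auto simp: min_def max_def)
  show "mono (\<lambda>s. C x (max 0 (min 1 s)))"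
  proof (rule monoI)
    fix s t :: real assume "s \<le> t"
    then show "C x (max 0 (min 1 s)) \<le> C x (max 0 (min 1 t))" using incr[of s t] by simp
  qed
  show "1-lipschitz_on UNIV (\<lambda>s. C x (max 0 (min 1 s)))"
  proof (rule lipschitz_onI)
    fix s t :: real
    show "dist (C x (max 0 (min 1 s))) (C x (max 0 (min 1 t))) \<le> 1 * dist s t"
      using incr[of s t] incr[of t s] by (cases "s \<le> t") (auto simp: dist_real_def)
  qed simp
qed

lemma copula_section_deriv:
  assumes "is_copula C" "x \<in> {0..1}"
  obtains N where "negligible N"
    "\<And>t. t \<in> {0..1} - N \<Longrightarrow> (C x has_real_derivative deriv (C x) t) (at t)"
    "\<And>t. t \<in> {0..1} - N \<Longrightarrow> deriv (C x) t \<in> {0..1}"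
proof
  define f where "f s = C x (max 0 (min 1 s))" for s
  show "negligible ({t. \<not> f differentiable (at t)} \<union> {0, 1})"
    using mono_lipschitz_differentiable_ae[OF copula_section_clamped[OF assms, folded f_def]] by simp
  fix t assume t: "t \<in> {0..1} - ({t. \<not> f differentiable (at t)} \<union> {0, 1})"
  have ev: "\<forall>\<^sub>F s in nhds t. C x s = f s"
    using t by (intro eventually_nhds_eq_on_interval[of 0 1]) (auto simp: f_def)
  have "(f has_real_derivative deriv f t) (at t)"
    using t by (simp add: DERIV_deriv_iff_real_differentiable)
  moreover have "deriv (C x) t = deriv f t" by (rule deriv_cong_ev[OF ev refl])
  ultimately show "(C x has_real_derivative deriv (C x) t) (at t)"
    using DERIV_cong_ev[OF refl ev refl] by simp
  show "deriv (C x) t \<in> {0..1}"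
    using \<open>deriv (C x) t = deriv f t\<close> t
      deriv_mono_lipschitz[OF copula_section_clamped[OF assms, folded f_def]] by simp
qed

lemma copula_section_has_integral:
  assumes "is_copula C" "x \<in> {0..1}" "v \<in> {0..1}"
  shows "(deriv (C x) has_integral C x v) {0..v}"
proof -
  define f where "f s = C x (max 0 (min 1 s))" for s
  have "(deriv f has_integral f v - f 0) {0..v}"
    using assms(3)
    by (intro mono_lipschitz_has_integral_deriv[OF copula_section_clamped[OF assms(1,2), folded f_def]])
      auto
  moreover have "f v - f 0 = C x v"
    using assms(3) is_copula_boundary[OF assms(1,2)] by (simp add: f_def)
  moreover have "deriv f t = deriv (C x) t" if "t \<in> {0..v} - {0, v}" for t
    using that assms(3)
    by (intro deriv_cong_ev[OF eventually_nhds_eq_on_interval[of 0 1]]) (auto simp: f_def)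
  ultimately show ?thesis
    using has_integral_spike[of "{0, v}" "{0..v}" "deriv (C x)" "deriv f"] by auto
qed

lemma integrable_on_mult_ae_bounded:
  fixes \<phi> \<psi> :: "real \<Rightarrow> real"
  assumes "\<phi> integrable_on S" "\<psi> integrable_on S" "S \<in> sets lebesgue" "negligible N"
    and "\<And>t. t \<in> S - N \<Longrightarrow> \<bar>\<phi> t\<bar> \<le> B" "\<And>t. t \<in> S - N \<Longrightarrow> 0 \<le> \<psi> t"
  shows "(\<lambda>t. \<phi> t * \<psi> t) integrable_on S"
proof -
  have spike: "negligible {t \<in> S - (S - N). g t \<noteq> 0}" "negligible {t \<in> (S - N) - S. g t \<noteq> 0}"
    for g :: "real \<Rightarrow> real"
    using assms(4) by (auto intro: negligible_subset)
  have "\<phi> integrable_on S - N" "\<psi> integrable_on S - N"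
    using integrable_spike_set[OF assms(1) spike] integrable_spike_set[OF assms(2) spike] by auto
  have "\<phi> \<in> borel_measurable (lebesgue_on (S - N))"
    by (rule integrable_imp_measurable) fact
  moreover have "S - N \<in> sets lebesgue" using assms(3,4) by (simp add: negligible_imp_sets sets.Diff)
  moreover have "bounded (\<phi> ` (S - N))" using assms(5) by (auto simp: bounded_iff)
  moreover have "\<psi> absolutely_integrable_on S - N"
    by (rule nonnegative_absolutely_integrable_1) fact+
  ultimately have "(\<lambda>t. \<phi> t * \<psi> t) absolutely_integrable_on S - N"
    by (rule absolutely_integrable_bounded_measurable_product_real)
  then show ?thesis
    using integrable_spike_set[OF _ spike(2) spike(1)] absolutely_integrable_on_def by blast
qed

lemma fold_prod_transpose: "fold_prod C D x y = fold_prod (\<lambda>u v. D v u) (\<lambda>u v. C v u) y x"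
  by (simp add: fold_prod_def mult.commute)

lemma fold_prod_cong:
  assumes "\<And>s. s \<in> {0..1} \<Longrightarrow> C x s = C' x s" "\<And>s. s \<in> {0..1} \<Longrightarrow> D s y = D' s y"
  shows "fold_prod C D x y = fold_prod C' D' x y"
  unfolding fold_prod_def
proof (rule integral_spike[of "{0, 1}"])
  fix t :: real assume "t \<in> {0..1} - {0, 1}"
  then have "t \<in> {0<..<1}" by auto
  then have "deriv (C x) t = deriv (C' x) t" "deriv (\<lambda>s. D s y) t = deriv (\<lambda>s. D' s y) t"
    using assms by (auto intro!: deriv_cong_ev[OF eventually_nhds_eq_on_interval])
  then show "deriv (C' x) t * deriv (\<lambda>s. D' s y) t = deriv (C x) t * deriv (\<lambda>s. D s y) t" by simp
qed simp

lemma has_integral_fold_prod: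
  assumes "is_copula C" "is_copula D" "x \<in> {0..1}" "y \<in> {0..1}"
  shows "((\<lambda>t. deriv (C x) t * deriv (\<lambda>s. D s y) t) has_integral fold_prod C D x y) {0..1}"
proof -
  obtain N1 where N1: "negligible N1" "\<And>t. t \<in> {0..1} - N1 \<Longrightarrow> deriv (C x) t \<in> {0..1}"
    by (rule copula_section_deriv[OF assms(1,3)]) blast
  obtain N2 where N2: "negligible N2" "\<And>t. t \<in> {0..1} - N2 \<Longrightarrow> deriv (\<lambda>s. D s y) t \<in> {0..1}"
    by (rule copula_section_deriv[OF is_copula_transpose[OF assms(2)] assms(4)]) blast
  have "(\<lambda>t. deriv (C x) t * deriv (\<lambda>s. D s y) t) integrable_on {0..1}"
  proof (rule integrable_on_mult_ae_bounded[where N="N1 \<union> N2" and B=1])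
    show "deriv (C x) integrable_on {0..1}"
      using copula_section_has_integral[OF assms(1,3), of 1] by auto
    show "deriv (\<lambda>s. D s y) integrable_on {0..1}"
      using copula_section_has_integral[OF is_copula_transpose[OF assms(2)] assms(4), of 1] by auto
    show "negligible (N1 \<union> N2)" using N1(1) N2(1) by simp
    show "\<bar>deriv (C x) t\<bar> \<le> 1" if "t \<in> {0..1} - (N1 \<union> N2)" for t
      using N1(2)[of t] that by simp
    show "0 \<le> deriv (\<lambda>s. D s y) t" if "t \<in> {0..1} - (N1 \<union> N2)" for t
      using N2(2)[of t] that by simp
  qed simp
  then show ?thesis unfolding fold_prod_def by (rule integrable_integral)
qed

lemma deriv_copM_section:
  assumes "t \<noteq> y"
  shows "deriv (\<lambda>s. copM s y) t = (if t < y then 1 else 0)"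
proof -
  have "\<forall>\<^sub>F s in nhds t. copM s y = (if t < y then s else y)"
  proof (cases "t < y")
    case True
    then have "\<forall>\<^sub>F s in nhds t. s \<in> {..<y}" by (intro eventually_nhds_in_open) auto
    then show ?thesis by eventually_elim (use True in \<open>auto simp: copM_def\<close>)
  next
    case False
    then have "\<forall>\<^sub>F s in nhds t. s \<in> {y<..}" using assms by (intro eventually_nhds_in_open) auto
    then show ?thesis by eventually_elim (use False in \<open>auto simp: copM_def\<close>)
  qed
  then have "deriv (\<lambda>s. copM s y) t = deriv (\<lambda>s. if t < y then s else y) t"
    by (rule deriv_cong_ev) simp
  then show ?thesis by simp
qed

lemma fold_prod_copM_right:
  assumes "is_copula C" "x \<in> {0..1}" "y \<in> {0..1}"
  shows "fold_prod C copM x y = C x y"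
proof -
  have "((\<lambda>t. if t \<in> cbox 0 y then deriv (C x) t else 0) has_integral C x y) (cbox 0 1)"
    by (rule has_integral_restrict_closed_subinterval)
      (use copula_section_has_integral[OF assms] assms(3) in auto)
  then have restricted: "((\<lambda>t. if t \<in> {0..y} then deriv (C x) t else 0) has_integral C x y) {0..1}"
    by simp
  have "deriv (C x) t * deriv (\<lambda>s. copM s y) t = (if t \<in> {0..y} then deriv (C x) t else 0)"
    if "t \<in> {0..1} - {y}" for t
    using that by (simp add: deriv_copM_section)
  then have "((\<lambda>t. deriv (C x) t * deriv (\<lambda>s. copM s y) t) has_integral C x y) {0..1}"
    by (rule has_integral_spike[OF negligible_sing _ restricted])
  then show ?thesis unfolding fold_prod_def by (rule integral_unique)
qed

lemma fold_prod_copM_left: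
  assumes "is_copula D" "x \<in> {0..1}" "y \<in> {0..1}"
  shows "fold_prod copM D x y = D x y"
proof -
  have "(\<lambda>u v. copM v u) = copM" by (simp add: fun_eq_iff copM_def min.commute)
  then show ?thesis
    using fold_prod_copM_right[OF is_copula_transpose[OF assms(1)] assms(3,2)]
    by (simp add: fold_prod_transpose[of copM D])
qed

lemma fold_prod_copPi_right:
  assumes "is_copula C" "x \<in> {0..1}" "y \<in> {0..1}"
  shows "fold_prod C copPi x y = copPi x y"
proof -
  have "deriv (\<lambda>s. copPi s y) t = y" for t
    unfolding copPi_def by (rule DERIV_imp_deriv) (auto intro!: derivative_eq_intros)
  then have "fold_prod C copPi x y = integral {0..1} (\<lambda>t. deriv (C x) t * y)"
    by (simp add: fold_prod_def)
  also have "\<dots> = C x 1 * y"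
    using copula_section_has_integral[OF assms(1,2), of 1]
    by (intro integral_unique has_integral_mult_left) auto
  finally show ?thesis using is_copula_boundary[OF assms(1,2)] by (simp add: copPi_def)
qed

lemma fold_prod_copPi_left:
  assumes "is_copula D" "x \<in> {0..1}" "y \<in> {0..1}"
  shows "fold_prod copPi D x y = copPi x y"
proof -
  have "(\<lambda>u v. copPi v u) = copPi" by (simp add: fun_eq_iff copPi_def mult.commute)
  then show ?thesis
    using fold_prod_copPi_right[OF is_copula_transpose[OF assms(1)] assms(3,2)]
    by (simp add: fold_prod_transpose[of copPi D] copPi_def)
qed

lemma fold_prod_sum_right:
  assumes "is_copula C" "finite K" "\<And>k. k \<in> K \<Longrightarrow> is_copula (D k)" "x \<in> {0..1}" "y \<in> {0..1}"
  shows "fold_prod C (\<lambda>u v. \<Sum>k\<in>K. c k * D k u v) x y = (\<Sum>k\<in>K. c k * fold_prod C (D k) x y)"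
proof -
  have "\<exists>N. negligible N \<and>
      (\<forall>t\<in>{0..1} - N. ((\<lambda>s. D k s y) has_real_derivative deriv (\<lambda>s. D k s y) t) (at t))"
    if k: "k \<in> K" for k
    using copula_section_deriv[OF is_copula_transpose[OF assms(3)[OF k]] assms(5)] by (metis DiffI)
  then obtain N where N: "\<And>k. k \<in> K \<Longrightarrow> negligible (N k)"
    "\<And>k t. k \<in> K \<Longrightarrow> t \<in> {0..1} - N k \<Longrightarrow>
      ((\<lambda>s. D k s y) has_real_derivative deriv (\<lambda>s. D k s y) t) (at t)"
    by metis
  have deriv_sum: "deriv (\<lambda>s. \<Sum>k\<in>K. c k * D k s y) t = (\<Sum>k\<in>K. c k * deriv (\<lambda>s. D k s y) t)"
    if "t \<in> {0..1} - (\<Union>k\<in>K. N k)" for t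
    using that N(2) by (intro DERIV_imp_deriv DERIV_sum DERIV_cmult) auto
  have termwise: "((\<lambda>t. \<Sum>k\<in>K. c k * (deriv (C x) t * deriv (\<lambda>s. D k s y) t)) has_integral
      (\<Sum>k\<in>K. c k * fold_prod C (D k) x y)) {0..1}"
    using has_integral_fold_prod[OF assms(1) assms(3) assms(4,5)]
    by (intro has_integral_sum[OF assms(2)] has_integral_mult_right) auto
  have "((\<lambda>t. deriv (C x) t * deriv (\<lambda>s. \<Sum>k\<in>K. c k * D k s y) t) has_integral
      (\<Sum>k\<in>K. c k * fold_prod C (D k) x y)) {0..1}"
    by (rule has_integral_spike[OF _ _ termwise, of "\<Union>k\<in>K. N k"])
      (auto simp: N(1) assms(2) deriv_sum sum_distrib_left mult.left_commute)
  then show ?thesis unfolding fold_prod_def by (rule integral_unique)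
qed

lemma fold_prod_sum_left:
  assumes "is_copula D" "finite K" "\<And>k. k \<in> K \<Longrightarrow> is_copula (C k)" "x \<in> {0..1}" "y \<in> {0..1}"
  shows "fold_prod (\<lambda>u v. \<Sum>k\<in>K. c k * C k u v) D x y = (\<Sum>k\<in>K. c k * fold_prod (C k) D x y)"
  using fold_prod_sum_right[OF is_copula_transpose[OF assms(1)] assms(2) is_copula_transpose[OF assms(3)]
      assms(5,4)]
  by (simp add: fold_prod_transpose[of _ D] fold_prod_transpose[of "C k" D for k])

lemma fold_prod_add_right:
  assumes "is_copula C" "is_copula D1" "is_copula D2" "x \<in> {0..1}" "y \<in> {0..1}"
  shows "fold_prod C (\<lambda>u v. a * D1 u v + b * D2 u v) x y =
    a * fold_prod C D1 x y + b * fold_prod C D2 x y"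
  using fold_prod_sum_right[OF assms(1) finite_class.finite_UNIV,
      of "\<lambda>k. if k then D1 else D2" x y "\<lambda>k. if k then a else b"] assms(2-5)
  by (simp add: UNIV_bool add.commute)

lemma fold_prod_add_left:
  assumes "is_copula D" "is_copula C1" "is_copula C2" "x \<in> {0..1}" "y \<in> {0..1}"
  shows "fold_prod (\<lambda>u v. a * C1 u v + b * C2 u v) D x y =
    a * fold_prod C1 D x y + b * fold_prod C2 D x y"
  using fold_prod_add_right[OF is_copula_transpose[OF assms(1)] is_copula_transpose[OF assms(2)]
      is_copula_transpose[OF assms(3)] assms(5,4)]
  by (simp add: fold_prod_transpose[of _ D])

lemma copula_section_deriv_mono:
  assumes "is_copula C" "0 \<le> u1" "u1 \<le> u2" "u2 \<le> 1"
  obtains N where "negligible N" "\<And>t. t \<in> {0..1} - N \<Longrightarrow> deriv (C u1) t \<le> deriv (C u2) t"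
proof -
  obtain N1 where N1: "negligible N1"
      "\<And>t. t \<in> {0..1} - N1 \<Longrightarrow> (C u1 has_real_derivative deriv (C u1) t) (at t)"
    by (rule copula_section_deriv[of C u1]) (use assms in auto)
  obtain N2 where N2: "negligible N2"
      "\<And>t. t \<in> {0..1} - N2 \<Longrightarrow> (C u2 has_real_derivative deriv (C u2) t) (at t)"
    by (rule copula_section_deriv[of C u2]) (use assms in auto)
  have mono: "mono_on {0..1} (\<lambda>s. C u2 s - C u1 s)"
    using is_copula_2_increasing[OF assms(1-4)] by (intro mono_onI) (auto simp: algebra_simps)
  have "0 \<le> deriv (C u2) t - deriv (C u1) t" if t: "t \<in> {0..1} - (N1 \<union> N2 \<union> {0, 1})" for t
  proof (rule mono_on_imp_deriv_nonneg[OF mono])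
    show "((\<lambda>s. C u2 s - C u1 s) has_real_derivative deriv (C u2) t - deriv (C u1) t) (at t)"
      using t N1(2) N2(2) by (intro DERIV_diff) auto
  qed (use t in auto)
  then show ?thesis using N1(1) N2(1) by (intro that[of "N1 \<union> N2 \<union> {0, 1}"]) auto
qed

lemma fold_prod_boundary:
  assumes "is_copula C" "is_copula D" "u \<in> {0..1}"
  shows "fold_prod C D u 0 = 0" "fold_prod C D 0 u = 0" "fold_prod C D u 1 = u" "fold_prod C D 1 u = u"
proof -
  \<comment> \<open>on each edge of the unit square every copula agrees with copM or with copPi\<close>
  have "fold_prod C D u 0 = fold_prod C copPi u 0"
    using is_copula_boundary[OF assms(2)] by (intro fold_prod_cong) (auto simp: copPi_def)
  then show "fold_prod C D u 0 = 0"
    using fold_prod_copPi_right[OF assms(1,3)] by (simp add: copPi_def)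
  have "fold_prod C D 0 u = fold_prod copPi D 0 u"
    using is_copula_boundary[OF assms(1)] by (intro fold_prod_cong) (auto simp: copPi_def)
  then show "fold_prod C D 0 u = 0"
    using fold_prod_copPi_left[OF assms(2) _ assms(3)] by (simp add: copPi_def)
  have "fold_prod C D u 1 = fold_prod C copM u 1"
    using is_copula_boundary[OF assms(2)] by (intro fold_prod_cong) (auto simp: copM_def)
  then show "fold_prod C D u 1 = u"
    using fold_prod_copM_right[OF assms(1,3)] is_copula_boundary[OF assms(1,3)] by simp
  have "fold_prod C D 1 u = fold_prod copM D 1 u"
    using is_copula_boundary[OF assms(1)] by (intro fold_prod_cong) (auto simp: copM_def)
  then show "fold_prod C D 1 u = u"
    using fold_prod_copM_left[OF assms(2) _ assms(3)] is_copula_boundary[OF assms(2,3)] by simp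
qed

lemma is_copula_fold_prod:
  assumes "is_copula C" "is_copula D"
  shows "is_copula (fold_prod C D)"
proof -
  have "0 \<le> fold_prod C D u2 v2 - fold_prod C D u2 v1 - fold_prod C D u1 v2 + fold_prod C D u1 v1"
    if box: "0 \<le> u1" "u1 \<le> u2" "u2 \<le> 1" "0 \<le> v1" "v1 \<le> v2" "v2 \<le> 1" for u1 u2 v1 v2
  proof -
    obtain N1 where N1: "negligible N1" "\<And>t. t \<in> {0..1} - N1 \<Longrightarrow> deriv (C u1) t \<le> deriv (C u2) t"
      using copula_section_deriv_mono[OF assms(1) box(1-3)] by blast
    obtain N2 where N2: "negligible N2"
      "\<And>t. t \<in> {0..1} - N2 \<Longrightarrow> deriv (\<lambda>s. D s v1) t \<le> deriv (\<lambda>s. D s v2) t"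
      using copula_section_deriv_mono[OF is_copula_transpose[OF assms(2)] box(4-6)] by blast
    let ?a = "\<lambda>u t. deriv (C u) t" and ?b = "\<lambda>v t. deriv (\<lambda>s. D s v) t"
    have "((\<lambda>t. (?a u2 t - ?a u1 t) * (?b v2 t - ?b v1 t)) has_integral
        fold_prod C D u2 v2 - fold_prod C D u2 v1 - fold_prod C D u1 v2 + fold_prod C D u1 v1) {0..1}"
      using box
      by (simp add: algebra_simps,
          intro has_integral_add has_integral_diff has_integral_fold_prod[OF assms]) auto
    then have "((\<lambda>t. if t \<in> N1 \<union> N2 then 0 else (?a u2 t - ?a u1 t) * (?b v2 t - ?b v1 t)) has_integral
        fold_prod C D u2 v2 - fold_prod C D u2 v1 - fold_prod C D u1 v2 + fold_prod C D u1 v1) {0..1}"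
      by (rule has_integral_spike[OF negligible_Un[OF N1(1) N2(1)], rotated]) simp
    then show ?thesis
      by (rule has_integral_nonneg) (use N1(2) N2(2) in auto)
  qed
  then show ?thesis using fold_prod_boundary[OF assms] unfolding is_copula_def by blast
qed

lemma is_copula_fold_pow: "is_copula C \<Longrightarrow> is_copula (fold_pow C n)"
  by (induction n) (auto simp: is_copula_copM is_copula_fold_prod)

lemma fold_pow_Suc_eq:
  assumes "is_copula C" "x \<in> {0..1}" "y \<in> {0..1}"
  shows "fold_pow C (Suc n) x y = fold_prod (fold_pow C n) C x y"
  using fold_prod_copM_left[OF assms] by simp

section \<open>Powers of mixtures with M and \<Pi>\<close>

lemma fold_pow_mix_copPi:
  assumes "is_copula C" "0 \<le> \<theta>" "\<theta> \<le> 1" "x \<in> {0..1}" "y \<in> {0..1}"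
  shows "fold_pow (\<lambda>u v. (1 - \<theta>) * C u v + \<theta> * copPi u v) n x y =
    (1 - \<theta>) ^ n * fold_pow C n x y + (1 - (1 - \<theta>) ^ n) * copPi x y"
  using assms(4,5)
proof (induction n arbitrary: x y)
  case (Suc n)
  define A where "A = (\<lambda>u v. (1 - \<theta>) * C u v + \<theta> * copPi u v)"
  have A: "is_copula A"
    unfolding A_def using is_copula_convex_comb[OF assms(1) is_copula_copPi assms(2,3)] .
  have Cn: "is_copula (fold_pow C n)" by (rule is_copula_fold_pow[OF assms(1)])
  have "fold_pow A (Suc n) x y = fold_prod (fold_pow A n) A x y"
    by (rule fold_pow_Suc_eq[OF A Suc.prems])
  also have "\<dots> =
      fold_prod (\<lambda>u v. (1 - \<theta>) ^ n * fold_pow C n u v + (1 - (1 - \<theta>) ^ n) * copPi u v) A x y"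
    by (rule fold_prod_cong) (use Suc.IH Suc.prems in \<open>auto simp: A_def\<close>)
  also have "\<dots> =
      (1 - \<theta>) ^ n * fold_prod (fold_pow C n) A x y + (1 - (1 - \<theta>) ^ n) * fold_prod copPi A x y"
    by (rule fold_prod_add_left[OF A Cn is_copula_copPi Suc.prems])
  also have "fold_prod (fold_pow C n) A x y = (1 - \<theta>) * fold_pow C (Suc n) x y + \<theta> * copPi x y"
    unfolding A_def
    using fold_prod_add_right[OF Cn assms(1) is_copula_copPi Suc.prems]
      fold_pow_Suc_eq[OF assms(1) Suc.prems] fold_prod_copPi_right[OF Cn Suc.prems] by simp
  also have "fold_prod copPi A x y = copPi x y" by (rule fold_prod_copPi_left[OF A Suc.prems])
  finally show ?case unfolding A_def by (simp add: algebra_simps)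
qed simp

lemma tendsto_fold_pow_mix_copPi:
  assumes "is_copula C" "0 < \<theta>" "\<theta> \<le> 1" "x \<in> {0..1}" "y \<in> {0..1}"
  shows "(\<lambda>n. fold_pow (\<lambda>u v. (1 - \<theta>) * C u v + \<theta> * copPi u v) n x y) \<longlonglongrightarrow> copPi x y"
proof -
  have geom: "(\<lambda>n. (1 - \<theta>) ^ n) \<longlonglongrightarrow> 0" using assms(2,3) by (intro LIMSEQ_power_zero) auto
  have "(\<lambda>n. (1 - \<theta>) ^ n * fold_pow C n x y) \<longlonglongrightarrow> 0"
  proof (rule Lim_null_comparison[OF _ geom])
    show "\<forall>\<^sub>F n in sequentially. norm ((1 - \<theta>) ^ n * fold_pow C n x y) \<le> (1 - \<theta>) ^ n"
      using copula_range[OF is_copula_fold_pow[OF assms(1)] assms(4,5)] assms(3)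
      by (intro always_eventually allI) (simp add: abs_mult mult_left_le)
  qed
  then have "(\<lambda>n. (1 - \<theta>) ^ n * fold_pow C n x y + (1 - (1 - \<theta>) ^ n) * copPi x y)
      \<longlonglongrightarrow> 0 + (1 - 0) * copPi x y"
    by (intro tendsto_intros geom)
  then show ?thesis using fold_pow_mix_copPi[OF assms(1) _ assms(3-5)] assms(2) by simp
qed

lemma pow_times_geometric_tendsto_0:
  fixes q :: real
  assumes "0 \<le> q" "q < 1"
  shows "(\<lambda>n. real n ^ k * q ^ n) \<longlonglongrightarrow> 0"
proof (cases "k = 0")
  case True
  then show ?thesis using assms by (simp add: LIMSEQ_power_zero)
next
  case False
  \<comment> \<open>n^k q^n = (n r^n)^k for the k-th root r of q, and n r^n \<longlonglongrightarrow> 0\<close>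
  define r where "r = root k q"
  have r: "r ^ k = q" "0 \<le> r" "r < 1"
    using assms False by (auto simp: r_def real_root_pow_pos2)
  have "(\<lambda>n. real n * r ^ n) \<longlonglongrightarrow> 0"
    using powser_times_n_limit_0[of r] r(2,3) by simp
  then have "(\<lambda>n. (real n * r ^ n) ^ k) \<longlonglongrightarrow> 0 ^ k" by (rule tendsto_power)
  moreover have "(real n * r ^ n) ^ k = real n ^ k * q ^ n" for n
    by (simp add: power_mult_distrib flip: r(1) power_mult, simp add: mult.commute)
  ultimately show ?thesis using False by (simp add: power_0_left)
qed

definition binomial_weight :: "real \<Rightarrow> nat \<Rightarrow> nat \<Rightarrow> real" where
  "binomial_weight p n k = real (n choose k) * p ^ k * (1 - p) ^ (n - k)"

lemma binomial_weight_nonneg: "0 \<le> p \<Longrightarrow> p \<le> 1 \<Longrightarrow> 0 \<le> binomial_weight p n k"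
  unfolding binomial_weight_def by simp

lemma sum_binomial_weight: "(\<Sum>k\<le>n. binomial_weight p n k) = 1"
  using binomial_ring[of p "1 - p" n] by (simp add: binomial_weight_def)

lemma binomial_weight_eq_0: "n < k \<Longrightarrow> binomial_weight p n k = 0"
  unfolding binomial_weight_def by simp

lemma binomial_weight_Suc_0: "binomial_weight p (Suc n) 0 = (1 - p) * binomial_weight p n 0"
  unfolding binomial_weight_def by simp

lemma binomial_weight_Suc_Suc:
  "binomial_weight p (Suc n) (Suc k) =
    p * binomial_weight p n k + (1 - p) * binomial_weight p n (Suc k)"
proof (cases "k < n")
  case True
  then have pow: "(1 - p) ^ (n - k) = (1 - p) * (1 - p) ^ (n - Suc k)"
    by (simp flip: power_Suc add: Suc_diff_Suc)
  show ?thesis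
    unfolding binomial_weight_def binomial_Suc_Suc of_nat_add distrib_right
    by (simp add: pow ac_simps)
qed (simp add: binomial_weight_def algebra_simps)

lemma sum_binomial_weight_Suc:
  "(\<Sum>k\<le>n. binomial_weight p n k * (p * a (Suc k) + (1 - p) * a k)) =
   (\<Sum>k\<le>Suc n. binomial_weight p (Suc n) k * a k)"
proof -
  have "(\<Sum>k\<le>n. binomial_weight p n k * ((1 - p) * a k)) =
      (\<Sum>k\<le>Suc n. binomial_weight p n k * ((1 - p) * a k))"
    by (simp add: binomial_weight_eq_0)
  also have "\<dots> = binomial_weight p n 0 * ((1 - p) * a 0) +
      (\<Sum>k\<le>n. binomial_weight p n (Suc k) * ((1 - p) * a (Suc k)))"
    by (rule sum.atMost_Suc_shift)
  finally have shifted: "(\<Sum>k\<le>n. binomial_weight p n k * ((1 - p) * a k)) = \<dots>" .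
  have "(\<Sum>k\<le>n. binomial_weight p n k * (p * a (Suc k) + (1 - p) * a k)) =
      (\<Sum>k\<le>n. binomial_weight p n k * (p * a (Suc k))) + (\<Sum>k\<le>n. binomial_weight p n k * ((1 - p) * a k))"
    by (simp add: distrib_left sum.distrib)
  also have "\<dots> = binomial_weight p n 0 * ((1 - p) * a 0) +
      (\<Sum>k\<le>n. binomial_weight p n k * (p * a (Suc k)) +
        binomial_weight p n (Suc k) * ((1 - p) * a (Suc k)))"
    unfolding shifted sum.distrib by simp
  also have "\<dots> = binomial_weight p n 0 * ((1 - p) * a 0) +
      (\<Sum>k\<le>n. (p * binomial_weight p n k + (1 - p) * binomial_weight p n (Suc k)) * a (Suc k))"
    by (simp add: algebra_simps)
  also have "\<dots> =
      binomial_weight p (Suc n) 0 * a 0 + (\<Sum>k\<le>n. binomial_weight p (Suc n) (Suc k) * a (Suc k))"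
    by (simp add: binomial_weight_Suc_Suc binomial_weight_Suc_0)
  also have "\<dots> = (\<Sum>k\<le>Suc n. binomial_weight p (Suc n) k * a k)"
    by (rule sum.atMost_Suc_shift[symmetric])
  finally show ?thesis .
qed

lemma binomial_weight_tendsto_0:
  assumes "0 < p" "p < 1"
  shows "(\<lambda>n. binomial_weight p n k) \<longlonglongrightarrow> 0"
proof (rule Lim_null_comparison)
  have "(\<lambda>n. real n ^ k * (1 - p) ^ n / (1 - p) ^ k) \<longlonglongrightarrow> 0 / (1 - p) ^ k"
    using pow_times_geometric_tendsto_0[of "1 - p" k] assms by (intro tendsto_divide) auto
  then show "(\<lambda>n. real n ^ k * (1 - p) ^ n / (1 - p) ^ k) \<longlonglongrightarrow> 0" by simp
  have "norm (binomial_weight p n k) \<le> real n ^ k * (1 - p) ^ n / (1 - p) ^ k" for n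
  proof (cases "k \<le> n")
    case True
    have "real (n choose k) \<le> real n ^ k" using binomial_le_pow[OF True] by (simp flip: of_nat_power)
    moreover have "p ^ k \<le> 1" using assms by (simp add: power_le_one)
    moreover have "(1 - p) ^ (n - k) = (1 - p) ^ n / (1 - p) ^ k"
      using assms True by (simp add: power_diff)
    ultimately have "binomial_weight p n k \<le> real n ^ k * 1 * ((1 - p) ^ n / (1 - p) ^ k)"
      unfolding binomial_weight_def using assms by (intro mult_mono) auto
    then show ?thesis using binomial_weight_nonneg[of p n k] assms by simp
  qed (use assms in \<open>simp add: binomial_weight_eq_0\<close>)
  then show "\<forall>\<^sub>F n in sequentially.
      norm (binomial_weight p n k) \<le> real n ^ k * (1 - p) ^ n / (1 - p) ^ k"
    by simp
qed

lemma weighted_sum_head_tail_bound: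
  fixes w :: "nat \<Rightarrow> nat \<Rightarrow> real"
  assumes nonneg: "\<And>k. 0 \<le> w n k" and total: "(\<Sum>k\<le>n. w n k) = 1"
    and "\<And>k. \<bar>b k\<bar> \<le> B" "\<And>k. K \<le> k \<Longrightarrow> \<bar>b k\<bar> \<le> \<epsilon>"
  shows "\<bar>\<Sum>k\<le>n. w n k * b k\<bar> \<le> B * (\<Sum>k<K. w n k) + \<epsilon>"
proof -
  have "0 \<le> B" "0 \<le> \<epsilon>" using assms(3)[of 0] assms(4)[of K] by linarith+
  have "\<bar>\<Sum>k\<le>n. w n k * b k\<bar> \<le> (\<Sum>k\<le>n. w n k * \<bar>b k\<bar>)"
    using sum_abs[of "\<lambda>k. w n k * b k"] by (simp add: abs_mult nonneg)
  also have "\<dots> \<le> (\<Sum>k\<le>n. B * (if k < K then w n k else 0) + \<epsilon> * w n k)"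
  proof (rule sum_mono)
    fix k
    have "\<bar>b k\<bar> \<le> (if k < K then B else 0) + \<epsilon>"
      using assms(3,4)[of k] \<open>0 \<le> B\<close> \<open>0 \<le> \<epsilon>\<close> by (cases "k < K") auto
    then have "w n k * \<bar>b k\<bar> \<le> w n k * ((if k < K then B else 0) + \<epsilon>)"
      using nonneg by (rule mult_left_mono)
    then show "w n k * \<bar>b k\<bar> \<le> B * (if k < K then w n k else 0) + \<epsilon> * w n k"
      by (cases "k < K") (simp_all add: algebra_simps)
  qed
  also have "\<dots> = B * (\<Sum>k\<in>{..n} \<inter> {..<K}. w n k) + \<epsilon>"
    by (simp add: sum.distrib total sum.inter_restrict flip: sum_distrib_left)
  also have "\<dots> \<le> B * (\<Sum>k<K. w n k) + \<epsilon>"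
    using nonneg \<open>0 \<le> B\<close> by (intro add_right_mono mult_left_mono sum_mono2) auto
  finally show ?thesis .
qed

lemma weighted_average_tendsto:
  fixes w :: "nat \<Rightarrow> nat \<Rightarrow> real"
  assumes nonneg: "\<And>n k. 0 \<le> w n k" and total: "\<And>n. (\<Sum>k\<le>n. w n k) = 1"
    and vanish: "\<And>k. (\<lambda>n. w n k) \<longlonglongrightarrow> 0" and "a \<longlonglongrightarrow> c"
  shows "(\<lambda>n. \<Sum>k\<le>n. w n k * a k) \<longlonglongrightarrow> c"
proof -
  have "(\<lambda>k. a k - c) \<longlonglongrightarrow> 0" using \<open>a \<longlonglongrightarrow> c\<close> by (rule LIM_zero)
  then obtain B where "0 < B" and B: "\<And>k. \<bar>a k - c\<bar> \<le> B"
    using BseqE[OF convergent_imp_Bseq[OF convergentI]] by (metis real_norm_def)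
  have "(\<lambda>n. \<Sum>k\<le>n. w n k * (a k - c)) \<longlonglongrightarrow> 0"
  proof (rule LIMSEQ_I)
    fix r :: real assume "0 < r"
    then obtain K where K: "\<And>k. K \<le> k \<Longrightarrow> \<bar>a k - c\<bar> \<le> r / 2"
      using LIMSEQ_D[OF \<open>(\<lambda>k. a k - c) \<longlonglongrightarrow> 0\<close>, of "r / 2"] by (auto intro: less_imp_le)
    have "(\<lambda>n. \<Sum>k<K. w n k) \<longlonglongrightarrow> 0" by (intro tendsto_null_sum vanish)
    moreover have "0 < r / (2 * B)" using \<open>0 < r\<close> \<open>0 < B\<close> by simp
    ultimately obtain M where M: "\<And>n. M \<le> n \<Longrightarrow> \<bar>\<Sum>k<K. w n k\<bar> < r / (2 * B)"
      using LIMSEQ_D by (metis real_norm_def diff_zero)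
    have "\<bar>\<Sum>k\<le>n. w n k * (a k - c)\<bar> < r" if "M \<le> n" for n
    proof -
      have "\<bar>\<Sum>k\<le>n. w n k * (a k - c)\<bar> \<le> B * (\<Sum>k<K. w n k) + r / 2"
        using nonneg total B K by (rule weighted_sum_head_tail_bound)
      also have "\<dots> < r"
        using M[OF that] \<open>0 < B\<close> nonneg by (simp add: sum_nonneg field_simps)
      finally show ?thesis .
    qed
    then show "\<exists>no. \<forall>n\<ge>no. norm ((\<Sum>k\<le>n. w n k * (a k - c)) - 0) < r" by auto
  qed
  moreover have "(\<Sum>k\<le>n. w n k * a k) = (\<Sum>k\<le>n. w n k * (a k - c)) + c" for n
    using total[of n] by (simp add: algebra_simps sum_subtractf flip: sum_distrib_left)
  ultimately show ?thesis
    using tendsto_add[OF _ tendsto_const, of "\<lambda>n. \<Sum>k\<le>n. w n k * (a k - c)" 0 sequentially c]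
    by simp
qed

lemma fold_pow_mix_copM:
  assumes "is_copula C" "0 \<le> \<theta>" "\<theta> \<le> 1" "x \<in> {0..1}" "y \<in> {0..1}"
  shows "fold_pow (\<lambda>u v. (1 - \<theta>) * C u v + \<theta> * copM u v) n x y =
    (\<Sum>k\<le>n. binomial_weight (1 - \<theta>) n k * fold_pow C k x y)"
  using assms(4,5)
proof (induction n arbitrary: x y)
  case (Suc n)
  define A where "A = (\<lambda>u v. (1 - \<theta>) * C u v + \<theta> * copM u v)"
  have A: "is_copula A"
    unfolding A_def using is_copula_convex_comb[OF assms(1) is_copula_copM assms(2,3)] .
  have Ck: "is_copula (fold_pow C k)" for k by (rule is_copula_fold_pow[OF assms(1)])
  have "fold_pow A (Suc n) x y = fold_prod (fold_pow A n) A x y"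
    by (rule fold_pow_Suc_eq[OF A Suc.prems])
  also have "\<dots> = fold_prod (\<lambda>u v. \<Sum>k\<le>n. binomial_weight (1 - \<theta>) n k * fold_pow C k u v) A x y"
    by (rule fold_prod_cong) (use Suc.IH Suc.prems in \<open>auto simp: A_def\<close>)
  also have "\<dots> = (\<Sum>k\<le>n. binomial_weight (1 - \<theta>) n k * fold_prod (fold_pow C k) A x y)"
    by (rule fold_prod_sum_left[OF A finite_atMost Ck Suc.prems])
  also have "\<dots> = (\<Sum>k\<le>n. binomial_weight (1 - \<theta>) n k *
      ((1 - \<theta>) * fold_pow C (Suc k) x y + (1 - (1 - \<theta>)) * fold_pow C k x y))"
    unfolding A_def
    using fold_prod_add_right[OF Ck assms(1) is_copula_copM Suc.prems]
      fold_pow_Suc_eq[OF assms(1) Suc.prems] fold_prod_copM_right[OF Ck Suc.prems] by simp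
  also have "\<dots> = (\<Sum>k\<le>Suc n. binomial_weight (1 - \<theta>) (Suc n) k * fold_pow C k x y)"
    by (rule sum_binomial_weight_Suc)
  finally show ?case unfolding A_def .
qed (simp add: binomial_weight_def)

lemma tendsto_fold_pow_mix_copM:
  assumes "is_copula C" "0 < \<theta>" "\<theta> < 1" "x \<in> {0..1}" "y \<in> {0..1}"
    and "(\<lambda>n. fold_pow C n x y) \<longlonglongrightarrow> L"
  shows "(\<lambda>n. fold_pow (\<lambda>u v. (1 - \<theta>) * C u v + \<theta> * copM u v) n x y) \<longlonglongrightarrow> L"
proof -
  have "(\<lambda>n. \<Sum>k\<le>n. binomial_weight (1 - \<theta>) n k * fold_pow C k x y) \<longlonglongrightarrow> L"
    using assms(2,3)
    by (intro weighted_average_tendsto[OF _ sum_binomial_weight binomial_weight_tendsto_0 assms(6)]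
        binomial_weight_nonneg) auto
  then show ?thesis using fold_pow_mix_copM[OF assms(1) _ _ assms(4,5)] assms(2,3) by simp
qed

theorem mainTheorem3:
  fixes C Co :: "real \<Rightarrow> real \<Rightarrow> real" and \<theta> :: real
  assumes "is_copula C" and "0 < \<theta>" and "\<theta> < 1"
  shows "((\<forall>u\<in>{0..1}. \<forall>v\<in>{0..1}. (\<lambda>n. fold_pow C n u v) \<longlonglongrightarrow> Co u v) \<longrightarrow>
           (\<forall>u\<in>{0..1}. \<forall>v\<in>{0..1}.
              (\<lambda>n. fold_pow (\<lambda>x y. (1 - \<theta>) * C x y + \<theta> * copM x y) n u v) \<longlonglongrightarrow> Co u v))
       \<and> (\<forall>u\<in>{0..1}. \<forall>v\<in>{0..1}.
              (\<lambda>n. fold_pow (\<lambda>x y. (1 - \<theta>) * C x y + \<theta> * copPi x y) n u v) \<longlonglongrightarrow> copPi u v)"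
  using tendsto_fold_pow_mix_copM[OF assms]
    tendsto_fold_pow_mix_copPi[OF assms(1,2) less_imp_le[OF assms(3)]]
  by blast

end
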